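(* If $X$ is a closed permutation class with $\mathrm{al}(X)=\infty$, then $|X\cap S_n|\ge 2^{n-1}$ for every $n\in\mathbf{N}$.
   Context: $S_n$ is the set of permutations of $[n]$, $S=\bigcup_n S_n$. $\pi\prec\rho$ means $\rho$ (as a sequence) has a subsequence order-isomorphic to $\pi$ (i.e. with the same relative order of entries). A closed permutation class is a set $X\subset S$ closed downward under $\prec$. A permutation $\sigma$ is alternating if every value of $\sigma$ at an odd position is larger than every value of $\sigma$ at an even position, i.e. $\sigma(\{1,3,5,\dots\})>\sigma(\{2,4,6,\dots\})$. For $\pi\in S$, $\mathrm{al}(\pi)$ is the maximum length of an alternating permutation $\sigma$ with $\sigma\prec\pi$ or $\sigma\prec\pi^{-1}$, and for $X\subset S$, $\mathrm{al}(X)=\sup\{\mathrm{al}(\pi):\pi\in X\}$. *)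

theory Defs
  imports Main "HOL-Library.Extended_Nat"
begin

text \<open>A permutation of [n] is represented as the list of its values
  (one-line notation); we use the value set {0..<n} instead of {1..n},
  which does not affect order-isomorphism.  Position k (1-based) is list index k-1.\<close>

definition Sn :: "nat \<Rightarrow> nat list set" where
  "Sn n = {xs. length xs = n \<and> distinct xs \<and> set xs = {0..<n}}"

definition Sall :: "nat list set" where
  "Sall = (\<Union>n. Sn n)"

definition contained :: "nat list \<Rightarrow> nat list \<Rightarrow> bool" (infix "\<prec>" 50) where
  "p \<prec> r \<longleftrightarrow> (\<exists>f. (\<forall>i j. i < j \<and> j < length p \<longrightarrow> f i < f j)
      \<and> (\<forall>i < length p. f i < length r)
      \<and> (\<forall>i < length p. \<forall>j < length p. (p ! i < p ! j \<longleftrightarrow> r ! (f i) < r ! (f j))))"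

definition closed_class :: "nat list set \<Rightarrow> bool" where
  "closed_class X \<longleftrightarrow> X \<subseteq> Sall \<and> (\<forall>p r. r \<in> X \<and> p \<in> Sall \<and> p \<prec> r \<longrightarrow> p \<in> X)"

definition perm_inv :: "nat list \<Rightarrow> nat list" where
  "perm_inv xs = map (\<lambda>v. THE i. i < length xs \<and> xs ! i = v) [0..<length xs]"

text \<open>Alternating: values at odd (1-based) positions, i.e. even indices, exceed
  values at even (1-based) positions, i.e. odd indices.\<close>
definition alternating :: "nat list \<Rightarrow> bool" where
  "alternating s \<longleftrightarrow> s \<in> Sall \<and>
     (\<forall>i < length s. \<forall>j < length s. even i \<and> odd j \<longrightarrow> s ! j < s ! i)"

definition al :: "nat list \<Rightarrow> enat" where
  "al p = Sup {enat (length s) | s. alternating s \<and> (s \<prec> p \<or> s \<prec> perm_inv p)}"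

definition alX :: "nat list set \<Rightarrow> enat" where
  "alX X = Sup (al ` X)"

end

(* An alternating permutation s of length at least 2n has at least 2^(n-1) patterns of length n.
   Let slot j0 < n be the one where s(2 j0) is least among s(0), s(2), ..., s(2n-2), and for each
   other slot j < n take position 2j or 2j+1.  Every odd-indexed entry of s lies below every
   even-indexed one, so in the resulting pattern the entries below slot j0 are exactly those taken
   at odd positions: the 2^(n-1) choices give distinct patterns.  A closed class containing a
   permutation p with s contained in p or in its inverse contains these patterns or their
   inverses, as inversion preserves containment. *)

theory Submission
  imports Defs
begin

lemma Sall_iff: "p \<in> Sall \<longleftrightarrow> p \<in> Sn (length p)"
  unfolding Sall_def Sn_def by auto

lemma Sn_subset_Sall: "Sn n \<subseteq> Sall"
  unfolding Sall_def by blast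

lemma finite_Sn: "finite (Sn n)"
proof (rule finite_subset)
  show "Sn n \<subseteq> {xs. set xs \<subseteq> {0..<n} \<and> length xs = n}" unfolding Sn_def by auto
qed (simp add: finite_lists_length_eq)

lemma in_Sn_if_bounded:
  assumes "distinct xs" "length xs = n" "\<forall>x \<in> set xs. x < n"
  shows "xs \<in> Sn n"
proof -
  have "set xs \<subseteq> {0..<n}" "card (set xs) = card {0..<n}"
    using assms by (auto simp: distinct_card)
  then show ?thesis using assms unfolding Sn_def by (simp add: card_subset_eq)
qed

lemma contained_trans:
  assumes "p \<prec> q" "q \<prec> r" shows "p \<prec> r"
proof -
  obtain f where f: "\<forall>i j. i < j \<and> j < length p \<longrightarrow> f i < f j"
      "\<forall>i < length p. f i < length q"
      "\<forall>i < length p. \<forall>j < length p. (p ! i < p ! j \<longleftrightarrow> q ! (f i) < q ! (f j))"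
    using assms(1) unfolding contained_def by blast
  obtain g where g: "\<forall>i j. i < j \<and> j < length q \<longrightarrow> g i < g j"
      "\<forall>i < length q. g i < length r"
      "\<forall>i < length q. \<forall>j < length q. (q ! i < q ! j \<longleftrightarrow> r ! (g i) < r ! (g j))"
    using assms(2) unfolding contained_def by blast
  show ?thesis unfolding contained_def
  proof (intro exI[of _ "g \<circ> f"] conjI allI impI)
    fix i j assume "i < j \<and> j < length p"
    then show "(g \<circ> f) i < (g \<circ> f) j" using f g by auto
  next
    fix i assume "i < length p"
    then show "(g \<circ> f) i < length r" using f g by auto
  next
    fix i j assume "i < length p" "j < length p"
    then show "p ! i < p ! j \<longleftrightarrow> r ! ((g \<circ> f) i) < r ! ((g \<circ> f) j)" using f g by auto
  qed
qed

subsection \<open>Standardization\<close>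

definition std :: "nat list \<Rightarrow> nat list" where
  "std a = map (\<lambda>x. card {y \<in> set a. y < x}) a"

lemma length_std [simp]: "length (std a) = length a"
  unfolding std_def by simp

lemma card_below_less_iff:
  fixes x y :: nat
  assumes "finite A" "x \<in> A"
  shows "card {z \<in> A. z < x} < card {z \<in> A. z < y} \<longleftrightarrow> x < y"
proof
  assume "x < y"
  then have "{z \<in> A. z < x} \<subset> {z \<in> A. z < y}" using assms(2) by auto
  then show "card {z \<in> A. z < x} < card {z \<in> A. z < y}"
    using assms(1) by (intro psubset_card_mono) auto
next
  assume less: "card {z \<in> A. z < x} < card {z \<in> A. z < y}"
  show "x < y"
  proof (rule ccontr)
    assume "\<not> x < y"
    then have "card {z \<in> A. z < y} \<le> card {z \<in> A. z < x}"
      using assms(1) by (intro card_mono) auto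
    with less show False by simp
  qed
qed

lemma std_less_iff:
  assumes "i < length a" "j < length a"
  shows "std a ! i < std a ! j \<longleftrightarrow> a ! i < a ! j"
proof -
  have "std a ! i = card {y \<in> set a. y < a ! i}" "std a ! j = card {y \<in> set a. y < a ! j}"
    using assms unfolding std_def by simp_all
  then show ?thesis using card_below_less_iff[of "set a" "a ! i" "a ! j"] assms(1) by simp
qed

lemma std_in_Sn:
  assumes "distinct a" shows "std a \<in> Sn (length a)"
proof (rule in_Sn_if_bounded)
  show "distinct (std a)"
    unfolding distinct_conv_nth
  proof (intro allI impI)
    fix i j assume ij: "i < length (std a)" "j < length (std a)" "i \<noteq> j"
    then have "a ! i \<noteq> a ! j" using nth_eq_iff_index_eq[OF assms] by simp
    then show "std a ! i \<noteq> std a ! j" using ij std_less_iff[of i a j] std_less_iff[of j a i] by auto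
  qed
  show "\<forall>v \<in> set (std a). v < length a"
  proof
    fix v assume "v \<in> set (std a)"
    then obtain x where x: "x \<in> set a" "v = card {y \<in> set a. y < x}" unfolding std_def by auto
    have "v \<le> card (set a - {x})" unfolding x(2) by (intro card_mono) auto
    also have "\<dots> < card (set a)" using x(1) by (intro card_Diff1_less) simp_all
    finally show "v < length a" using distinct_card[OF assms] by simp
  qed
qed simp

lemma std_subseq_contained:
  assumes "distinct s" "sorted_wrt (<) idx" "\<forall>x \<in> set idx. x < length s"
  shows "std (map ((!) s) idx) \<prec> s"
  unfolding contained_def
proof (intro exI[of _ "(!) idx"] conjI allI impI)
  fix i j assume "i < j \<and> j < length (std (map ((!) s) idx))"
  then show "idx ! i < idx ! j" using assms(2) by (simp add: sorted_wrt_iff_nth_less)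
next
  fix i assume "i < length (std (map ((!) s) idx))"
  then show "idx ! i < length s" using assms(3) by simp
next
  fix i j assume "i < length (std (map ((!) s) idx))" "j < length (std (map ((!) s) idx))"
  then show "std (map ((!) s) idx) ! i < std (map ((!) s) idx) ! j \<longleftrightarrow> s ! (idx ! i) < s ! (idx ! j)"
    by (simp add: std_less_iff)
qed

subsection \<open>Inverse permutations\<close>

lemma length_perm_inv [simp]: "length (perm_inv xs) = length xs"
  unfolding perm_inv_def by simp

lemma perm_inv_nth_eq_iff:
  assumes "xs \<in> Sn n" "v < n"
  shows "perm_inv xs ! v = i \<longleftrightarrow> i < n \<and> xs ! i = v"
proof -
  have len: "length xs = n" using assms(1) unfolding Sn_def by simp
  have unique: "\<exists>!i. i < n \<and> xs ! i = v"
    using assms distinct_Ex1[of xs v] unfolding Sn_def by simp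
  have eq: "perm_inv xs ! v = (THE i. i < n \<and> xs ! i = v)"
    using assms(2) len unfolding perm_inv_def by simp
  show ?thesis
  proof
    assume "perm_inv xs ! v = i"
    then show "i < n \<and> xs ! i = v" using theI'[OF unique] eq by simp
  next
    assume "i < n \<and> xs ! i = v"
    then show "perm_inv xs ! v = i" using the1_equality[OF unique] eq by simp
  qed
qed

lemma perm_inv_nth:
  assumes "xs \<in> Sn n" "v < n"
  shows "perm_inv xs ! v < n" "xs ! (perm_inv xs ! v) = v"
  using perm_inv_nth_eq_iff[OF assms] by auto

lemma perm_inv_in_Sn:
  assumes "xs \<in> Sn n" shows "perm_inv xs \<in> Sn n"
proof (rule in_Sn_if_bounded)
  show "length (perm_inv xs) = n" using assms unfolding Sn_def by simp
  then show "distinct (perm_inv xs)"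
    unfolding distinct_conv_nth using perm_inv_nth(2)[OF assms] by metis
  show "\<forall>i \<in> set (perm_inv xs). i < n"
    using perm_inv_nth(1)[OF assms] \<open>length (perm_inv xs) = n\<close> by (auto simp: in_set_conv_nth)
qed

lemma perm_inv_perm_inv:
  assumes "xs \<in> Sn n" shows "perm_inv (perm_inv xs) = xs"
proof (rule nth_equalityI)
  have len: "length xs = n" using assms unfolding Sn_def by auto
  then show "length (perm_inv (perm_inv xs)) = length xs" by simp
  fix i assume "i < length (perm_inv (perm_inv xs))"
  then have "i < n" "xs ! i < n" using assms len unfolding Sn_def by auto
  then show "perm_inv (perm_inv xs) ! i = xs ! i"
    using perm_inv_nth_eq_iff[OF perm_inv_in_Sn[OF assms]] perm_inv_nth_eq_iff[OF assms] by simp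
qed

lemma inj_on_perm_inv: "inj_on perm_inv (Sn n)"
  by (metis inj_onI perm_inv_perm_inv)

lemma contained_perm_inv:
  assumes p: "p \<in> Sn k" and r: "r \<in> Sn m" and "p \<prec> r"
  shows "perm_inv p \<prec> perm_inv r"
proof -
  obtain f where f_mono: "\<forall>i j. i < j \<and> j < k \<longrightarrow> f i < f j"
      and f_range: "\<forall>i < k. f i < m"
      and f_order: "\<forall>i < k. \<forall>j < k. (p ! i < p ! j \<longleftrightarrow> r ! (f i) < r ! (f j))"
    using \<open>p \<prec> r\<close> p r unfolding contained_def Sn_def by auto
  have f_less_iff: "f i < f j \<longleftrightarrow> i < j" if "i < k" "j < k" for i j
    using f_mono that by (metis linorder_neqE_nat not_less_iff_gr_or_eq)
  \<comment> \<open>Inversion swaps positions and values: value \<open>v\<close> of \<open>p\<close> sits at position \<open>perm_inv p ! v\<close>,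
    which \<open>f\<close> sends to a position of \<open>r\<close>; the value there is the position of \<open>perm_inv r\<close> used.\<close>
  define g where "g v = r ! (f (perm_inv p ! v))" for v
  have g_range: "g v < m" if "v < k" for v
    using r f_range perm_inv_nth(1)[OF p that] unfolding g_def Sn_def by auto
  have perm_inv_g: "perm_inv r ! g v = f (perm_inv p ! v)" if "v < k" for v
    using perm_inv_nth_eq_iff[OF r g_range[OF that]] f_range perm_inv_nth(1)[OF p that]
    unfolding g_def by simp
  show ?thesis unfolding contained_def
  proof (intro exI[of _ g] conjI allI impI)
    fix u v assume uv: "u < v \<and> v < length (perm_inv p)"
    then have "u < k" "v < k" using p unfolding Sn_def by auto
    moreover have "p ! (perm_inv p ! u) < p ! (perm_inv p ! v)"
      using uv perm_inv_nth(2)[OF p] calculation by simp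
    ultimately show "g u < g v"
      using f_order perm_inv_nth(1)[OF p] unfolding g_def by blast
  next
    fix v assume "v < length (perm_inv p)"
    then show "g v < length (perm_inv r)" using p r g_range unfolding Sn_def by simp
  next
    fix u v assume "u < length (perm_inv p)" "v < length (perm_inv p)"
    then show "perm_inv p ! u < perm_inv p ! v \<longleftrightarrow> perm_inv r ! g u < perm_inv r ! g v"
      using p perm_inv_g f_less_iff perm_inv_nth(1)[OF p] unfolding Sn_def by auto
  qed
qed

subsection \<open>Patterns of alternating permutations\<close>

definition patterns :: "nat \<Rightarrow> nat list \<Rightarrow> nat list set" where
  "patterns n s = {\<pi> \<in> Sn n. \<pi> \<prec> s}"

lemma finite_patterns: "finite (patterns n s)"
  unfolding patterns_def using finite_Sn by simp

lemma std_subseq_in_patterns: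
  assumes "distinct s" "sorted_wrt (<) idx" "\<forall>x \<in> set idx. x < length s"
  shows "std (map ((!) s) idx) \<in> patterns (length idx) s"
proof -
  have "distinct (map ((!) s) idx)"
    using assms by (simp add: distinct_map strict_sorted_iff inj_on_nth)
  then show ?thesis
    unfolding patterns_def using std_in_Sn std_subseq_contained[OF assms] by fastforce
qed

definition slot_positions :: "nat \<Rightarrow> nat set \<Rightarrow> nat list" where
  "slot_positions n S = map (\<lambda>j. if j \<in> S then Suc (2 * j) else 2 * j) [0..<n]"

lemma length_slot_positions [simp]: "length (slot_positions n S) = n"
  unfolding slot_positions_def by simp

lemma nth_slot_positions [simp]:
  "j < n \<Longrightarrow> slot_positions n S ! j = (if j \<in> S then Suc (2 * j) else 2 * j)"
  unfolding slot_positions_def by simp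

lemma sorted_slot_positions: "sorted_wrt (<) (slot_positions n S)"
  unfolding sorted_wrt_iff_nth_less by auto

lemma slot_positions_less: "x \<in> set (slot_positions n S) \<Longrightarrow> x < 2 * n"
  unfolding slot_positions_def by auto

lemma alternating_distinct: "alternating s \<Longrightarrow> distinct s"
  unfolding alternating_def Sall_iff Sn_def by simp

lemma alternating_odd_less_even:
  "alternating s \<Longrightarrow> i < length s \<Longrightarrow> j < length s \<Longrightarrow> even i \<Longrightarrow> odd j \<Longrightarrow> s ! j < s ! i"
  unfolding alternating_def by blast

lemma slot_below_pivot_iff:
  assumes alt: "alternating s" and len: "2 * n \<le> length s"
    and pivot: "j0 < n" "\<forall>j < n. s ! (2 * j0) \<le> s ! (2 * j)" and "j < n"
  shows "s ! (slot_positions n S ! j) < s ! (2 * j0) \<longleftrightarrow> j \<in> S"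
  using alternating_odd_less_even[OF alt, of "2 * j0" "Suc (2 * j)"] pivot \<open>j < n\<close> len
  by (auto simp: not_less)

lemma slot_set_from_pattern:
  assumes alt: "alternating s" and len: "2 * n \<le> length s"
    and pivot: "j0 < n" "\<forall>j < n. s ! (2 * j0) \<le> s ! (2 * j)" and S: "S \<subseteq> {..<n} - {j0}"
  defines "\<pi> \<equiv> std (map ((!) s) (slot_positions n S))"
  shows "{j. j < n \<and> \<pi> ! j < \<pi> ! j0} = S"
proof -
  have "\<pi> ! j < \<pi> ! j0 \<longleftrightarrow> j \<in> S" if "j < n" for j
  proof -
    have "slot_positions n S ! j0 = 2 * j0" using S pivot(1) by auto
    then show ?thesis
      using slot_below_pivot_iff[OF alt len pivot that] std_less_iff that pivot(1)
      unfolding \<pi>_def by simp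
  qed
  then show ?thesis using S by auto
qed

lemma card_patterns_alternating:
  assumes alt: "alternating s" and len: "2 * n \<le> length s" and "n \<ge> 1"
  shows "2 ^ (n - 1) \<le> card (patterns n s)"
proof -
  obtain j0 where pivot: "j0 < n" "\<forall>j < n. s ! (2 * j0) \<le> s ! (2 * j)"
    using ex_has_least_nat[of "\<lambda>j. j < n" 0 "\<lambda>j. s ! (2 * j)"] \<open>n \<ge> 1\<close> by auto
  define \<Phi> where "\<Phi> S = std (map ((!) s) (slot_positions n S))" for S
  define T where "T = {..<n} - {j0}"
  have slots: "{j. j < n \<and> \<Phi> S ! j < \<Phi> S ! j0} = S" if "S \<in> Pow T" for S
    using slot_set_from_pattern[OF alt len pivot] that unfolding \<Phi>_def T_def by simp
  have "inj_on \<Phi> (Pow T)"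
    by (rule inj_onI) (metis slots)
  have "\<Phi> S \<in> patterns n s" for S
  proof -
    have "\<forall>x \<in> set (slot_positions n S). x < length s" using slot_positions_less len by fastforce
    then show ?thesis
      using std_subseq_in_patterns[OF alternating_distinct[OF alt] sorted_slot_positions]
      unfolding \<Phi>_def by simp
  qed
  then have "\<Phi> ` Pow T \<subseteq> patterns n s" by blast
  have "2 ^ (n - 1) = card (Pow T)"
    using pivot(1) unfolding T_def by (simp add: card_Pow)
  also have "\<dots> = card (\<Phi> ` Pow T)"
    using card_image[OF \<open>inj_on \<Phi> (Pow T)\<close>] by simp
  also have "\<dots> \<le> card (patterns n s)"
    using card_mono[OF finite_patterns \<open>\<Phi> ` Pow T \<subseteq> patterns n s\<close>] .
  finally show ?thesis .
qed

subsection \<open>Closed classes\<close>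

lemma closed_classD:
  assumes "closed_class X" "r \<in> X" "p \<in> Sn n" "p \<prec> r"
  shows "p \<in> X"
  using assms Sn_subset_Sall unfolding closed_class_def by blast

lemma closed_class_in_Sn:
  assumes "closed_class X" "p \<in> X"
  shows "p \<in> Sn (length p)"
  using assms Sall_iff unfolding closed_class_def by blast

lemma patterns_subset_class:
  assumes "closed_class X" "p \<in> X" "s \<prec> p"
  shows "patterns n s \<subseteq> X \<inter> Sn n"
  using closed_classD[OF assms(1,2)] contained_trans[OF _ assms(3)] unfolding patterns_def by blast

lemma perm_inv_patterns_subset_class:
  assumes X: "closed_class X" and "p \<in> X" "s \<prec> perm_inv p"
  shows "perm_inv ` patterns n s \<subseteq> X \<inter> Sn n"
proof
  fix \<tau> assume "\<tau> \<in> perm_inv ` patterns n s"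
  then obtain \<pi> where \<pi>: "\<pi> \<in> Sn n" "\<pi> \<prec> s" and \<tau>: "\<tau> = perm_inv \<pi>"
    unfolding patterns_def by auto
  have p: "p \<in> Sn (length p)" using closed_class_in_Sn[OF X \<open>p \<in> X\<close>] .
  have "\<tau> \<prec> perm_inv (perm_inv p)"
    using contained_perm_inv[OF \<pi>(1) perm_inv_in_Sn[OF p] contained_trans[OF \<pi>(2) assms(3)]] \<tau>
    by simp
  then have "\<tau> \<prec> p" using perm_inv_perm_inv[OF p] by simp
  moreover have "\<tau> \<in> Sn n" using perm_inv_in_Sn[OF \<pi>(1)] \<tau> by simp
  ultimately show "\<tau> \<in> X \<inter> Sn n" using closed_classD[OF X \<open>p \<in> X\<close>] by blast
qed

lemma card_patterns_le_class:
  assumes "closed_class X" "p \<in> X" "s \<prec> p \<or> s \<prec> perm_inv p"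
  shows "card (patterns n s) \<le> card (X \<inter> Sn n)"
proof -
  have fin: "finite (X \<inter> Sn n)" using finite_Sn by simp
  from assms(3) show ?thesis
  proof
    assume "s \<prec> p"
    then show ?thesis using card_mono[OF fin patterns_subset_class[OF assms(1,2)]] by simp
  next
    assume "s \<prec> perm_inv p"
    moreover have "inj_on perm_inv (patterns n s)"
      using inj_on_perm_inv unfolding patterns_def by (rule inj_on_subset) auto
    ultimately show ?thesis
      using card_mono[OF fin perm_inv_patterns_subset_class[OF assms(1,2)]] card_image by metis
  qed
qed

lemma alX_infinite_long_alternating:
  assumes "alX X = \<infinity>"
  obtains p s where "p \<in> X" "alternating s" "s \<prec> p \<or> s \<prec> perm_inv p" "m < length s"
proof -
  have "enat m < alX X" using assms by simp
  then obtain p where "p \<in> X" "enat m < al p"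
    unfolding alX_def less_Sup_iff by auto
  then show ?thesis using that unfolding al_def less_Sup_iff by auto
qed

theorem mainTheorem2:
  fixes X :: "nat list set" and n :: nat
  assumes "closed_class X" and "alX X = \<infinity>" and "n \<ge> 1"
  shows "card (X \<inter> Sn n) \<ge> 2 ^ (n - 1)"
proof -
  obtain p s where "p \<in> X" "alternating s" "s \<prec> p \<or> s \<prec> perm_inv p" "2 * n < length s"
    using alX_infinite_long_alternating[OF assms(2)] .
  then have "2 ^ (n - 1) \<le> card (patterns n s)"
    using card_patterns_alternating \<open>n \<ge> 1\<close> by simp
  also have "\<dots> \<le> card (X \<inter> Sn n)"
    using card_patterns_le_class[OF assms(1)] \<open>p \<in> X\<close> \<open>s \<prec> p \<or> s \<prec> perm_inv p\<close> .
  finally show ?thesis .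
qed

end
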